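(* Let $R$ be a commutative ring with unit, let $\mathcal{P}$ be a poset satisfying the descending chain condition, and let $F\colon \mathcal{P}\to R\text{-mod}$ be a functor. Then the natural map $\operatorname{colim}_{\mathcal{P}_{<i}}F\to F(i)$ is a monomorphism for every $i\in\mathcal{P}$ if and only if $F$ is pseudo-projective.
   Context: A poset satisfies the descending chain condition (DCC) if it has no infinite strictly descending chain. For $i\in\mathcal{P}$, $\mathcal{P}_{<i}=\{j\in\mathcal{P}: j<i\}$ and $\mathcal{P}_{\le i}=\{j: j\le i\}$. For $j\le i$, $F(j<i)$ denotes the image under $F$ of the unique arrow $j\to i$, with $F(i<i)=1_{F(i)}$. For $j\in\mathcal{P}$, $\operatorname{Im}_F(j)=\sum_{k<j}\operatorname{Im}F(k<j)\subseteq F(j)$. For a subset $J$, $\max J$ denotes the set of maximal elements of $J$. A functor $F\colon\mathcal{P}\to R\text{-mod}$ is pseudo-projective at $i\in\mathcal{P}$ if for every finite subset $J\subset\mathcal{P}_{\le i}$ and every $\oplus_{j\in J}x_j\in\bigoplus_{j\in J}F(j)$ with $\sum_{j\in J}F(j<i)(x_j)=0$, one has $x_j\in\operatorname{Im}_F(j)$ for every $j\in\max J$. $F$ is pseudo-projective if it is pseudo-projective at every $i\in\mathcal{P}$. *)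

theory Defs
  imports Main "HOL.Modules" "HOL-Library.Function_Algebras"
begin

definition DCC :: "'p::order itself \<Rightarrow> bool" where
  "DCC _ \<longleftrightarrow> \<not> (\<exists>f :: nat \<Rightarrow> 'p. \<forall>n. f (Suc n) < f n)"

text \<open>R-modules: all modules F(i) are submodules of one ambient R-module
  (scalar multiplication s on type 'm).  A functor F : P -> R-mod is given by
  objects F i and maps Fm j i = F(j<i) for j \<le> i (only relevant on F j).\<close>
definition is_module_functor ::
  "('r::comm_ring_1 \<Rightarrow> 'm::ab_group_add \<Rightarrow> 'm) \<Rightarrow> ('p::order \<Rightarrow> 'm set) \<Rightarrow> ('p \<Rightarrow> 'p \<Rightarrow> 'm \<Rightarrow> 'm) \<Rightarrow> bool" where
  "is_module_functor s F Fm \<longleftrightarrow>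
     (\<forall>i. module.subspace s (F i)) \<and>
     (\<forall>j i. j \<le> i \<longrightarrow>
        (\<forall>x\<in>F j. Fm j i x \<in> F i) \<and>
        (\<forall>x\<in>F j. \<forall>y\<in>F j. Fm j i (x + y) = Fm j i x + Fm j i y) \<and>
        (\<forall>c. \<forall>x\<in>F j. Fm j i (s c x) = s c (Fm j i x))) \<and>
     (\<forall>i. \<forall>x\<in>F i. Fm i i x = x) \<and>
     (\<forall>j k i. j \<le> k \<and> k \<le> i \<longrightarrow> (\<forall>x\<in>F j. Fm k i (Fm j k x) = Fm j i x))"

definition ImF :: "('p::order \<Rightarrow> 'm::ab_group_add set) \<Rightarrow> ('p \<Rightarrow> 'p \<Rightarrow> 'm \<Rightarrow> 'm) \<Rightarrow> 'p \<Rightarrow> 'm set" where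
  "ImF F Fm j = {(\<Sum>k\<in>K. Fm k j (y k)) | K y. finite K \<and> K \<subseteq> {k. k < j} \<and> (\<forall>k\<in>K. y k \<in> F k)}"

definition maxset :: "'p::order set \<Rightarrow> 'p set" where
  "maxset J = {j \<in> J. \<not> (\<exists>k\<in>J. j < k)}"

definition pseudo_projective_at ::
  "('p::order \<Rightarrow> 'm::ab_group_add set) \<Rightarrow> ('p \<Rightarrow> 'p \<Rightarrow> 'm \<Rightarrow> 'm) \<Rightarrow> 'p \<Rightarrow> bool" where
  "pseudo_projective_at F Fm i \<longleftrightarrow>
     (\<forall>J x. finite J \<and> J \<subseteq> {j. j \<le> i} \<and> (\<forall>j\<in>J. x j \<in> F j) \<and>
        (\<Sum>j\<in>J. Fm j i (x j)) = 0 \<longrightarrow> (\<forall>j\<in>maxset J. x j \<in> ImF F Fm j))"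

definition pseudo_projective ::
  "('p::order \<Rightarrow> 'm::ab_group_add set) \<Rightarrow> ('p \<Rightarrow> 'p \<Rightarrow> 'm \<Rightarrow> 'm) \<Rightarrow> bool" where
  "pseudo_projective F Fm \<longleftrightarrow> (\<forall>i. pseudo_projective_at F Fm i)"

text \<open>Standard construction of colim over P_{<i} of F: the direct sum of the F(j), j<i,
  (finitely supported families) modulo the submodule generated by the elements
  e_j(a) - e_k(F(j<k) a), j \<le> k < i, a \<in> F j.\<close>
definition dsum_below :: "('p::order \<Rightarrow> 'm::ab_group_add set) \<Rightarrow> 'p \<Rightarrow> ('p \<Rightarrow> 'm) set" where
  "dsum_below F i = {x. (\<forall>j. x j \<in> F j) \<and> (\<forall>j. \<not> j < i \<longrightarrow> x j = 0) \<and> finite {j. x j \<noteq> 0}}"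

definition fscale :: "('r \<Rightarrow> 'm \<Rightarrow> 'm) \<Rightarrow> 'r \<Rightarrow> ('p \<Rightarrow> 'm) \<Rightarrow> ('p \<Rightarrow> 'm)" where
  "fscale s c x = (\<lambda>l. s c (x l))"

definition colim_rel ::
  "('r::comm_ring_1 \<Rightarrow> 'm::ab_group_add \<Rightarrow> 'm) \<Rightarrow> ('p::order \<Rightarrow> 'm set) \<Rightarrow> ('p \<Rightarrow> 'p \<Rightarrow> 'm \<Rightarrow> 'm) \<Rightarrow> 'p \<Rightarrow> ('p \<Rightarrow> 'm) set" where
  "colim_rel s F Fm i = module.span (fscale s)
     {(\<lambda>l. (if l = j then a else 0) - (if l = k then Fm j k a else 0)) | j k a. j \<le> k \<and> k < i \<and> a \<in> F j}"

definition colim ::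
  "('r::comm_ring_1 \<Rightarrow> 'm::ab_group_add \<Rightarrow> 'm) \<Rightarrow> ('p::order \<Rightarrow> 'm set) \<Rightarrow> ('p \<Rightarrow> 'p \<Rightarrow> 'm \<Rightarrow> 'm) \<Rightarrow> 'p \<Rightarrow> ('p \<Rightarrow> 'm) set set" where
  "colim s F Fm i = (\<lambda>x. {y \<in> dsum_below F i. y - x \<in> colim_rel s F Fm i}) ` dsum_below F i"

definition dsum_map :: "('p::order \<Rightarrow> 'p \<Rightarrow> 'm::ab_group_add \<Rightarrow> 'm) \<Rightarrow> 'p \<Rightarrow> ('p \<Rightarrow> 'm) \<Rightarrow> 'm" where
  "dsum_map Fm i x = (\<Sum>j\<in>{j. x j \<noteq> 0}. Fm j i (x j))"

definition colim_map :: "('p::order \<Rightarrow> 'p \<Rightarrow> 'm::ab_group_add \<Rightarrow> 'm) \<Rightarrow> 'p \<Rightarrow> ('p \<Rightarrow> 'm) set \<Rightarrow> 'm" where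
  "colim_map Fm i c = (THE y. \<exists>x\<in>c. y = dsum_map Fm i x)"

end

theory Submission
  imports Defs "HOL-Library.Multiset"
begin

(*
  The colimit over P_<i is the direct sum of the F(j), j < i, modulo the relations
  e_j(a) - e_k(F(j<k) a) for j <= k < i, so its map to F(i) is injective iff every element of
  the direct sum with zero image in F(i) is a finite sum of such relations; these sums are
  represented by lists of triples (j, k, a) with j < k.

  Pseudo-projective implies injective: induct on the support of a kernel element in the
  multiset order, which is well-founded by the DCC. At a maximal point m of the support,
  pseudo-projectivity at i puts the value x_m into Im_F(m), i.e. x_m is the image of an
  element y of the direct sum below m, and adding the relation y - e_m(x_m) removes m from
  the support at the cost of points below m.

  Injective implies pseudo-projective: if i itself lies in J, the value at i is minus the
  image of the other values. Otherwise the family, supported on J, is a sum of relations.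
  Induct on the multiset of their targets: if n is the largest target above the maximal
  point j0, the relations with target n add up to an element of the kernel at n, because all
  other relations vanish at n; injectivity at n rewrites them with targets below n. Once no
  target lies above j0, the value at j0 is visibly in Im_F(j0).
*)

lemma wf_less_if_DCC:
  assumes "DCC TYPE('p::order)"
  shows "wf {(x :: 'p, y). x < y}"
  using assms unfolding DCC_def wf_iff_no_infinite_down_chain by auto

lemma mult_mset_set_less:
  fixes m :: "'a::order"
  assumes "finite A" "finite B" "m \<in> B" "m \<notin> A" "\<forall>a\<in>A - B. a < m"
  shows "(mset_set A, mset_set B) \<in> mult {(x, y). x < y}"
proof -
  have A: "mset_set A = mset_set (A \<inter> B) + mset_set (A - B)"
    using assms(1) by (metis Int_Diff_Un Int_Diff_disjoint finite_Diff finite_Int mset_set_Union)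
  have B: "mset_set B = mset_set (A \<inter> B) + mset_set (B - A)"
    using assms(2)
    by (metis Int_Diff_Un Int_Diff_disjoint Int_commute finite_Diff finite_Int mset_set_Union)
  have "mset_set (B - A) \<noteq> {#}"
    using assms(2-4) by (auto simp: mset_set_empty_iff)
  moreover have "\<forall>a\<in>#mset_set (A - B). \<exists>b\<in>#mset_set (B - A). (a, b) \<in> {(x, y). x < y}"
    using assms by auto
  ultimately show ?thesis
    unfolding A B by (rule one_step_implies_mult)
qed

lemma sum_apply_fun: "(\<Sum>k\<in>S. f k) l = (\<Sum>k\<in>S. f k l)"
  by (induction S rule: infinite_finite_induct) auto

definition single_at :: "'p \<Rightarrow> 'm::zero \<Rightarrow> 'p \<Rightarrow> 'm" where
  "single_at j a = (\<lambda>l. if l = j then a else 0)"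

lemma single_at_apply: "single_at j a l = (if l = j then a else 0)"
  by (simp add: single_at_def)

lemma single_at_zero [simp]: "single_at j 0 = 0"
  by (simp add: single_at_def fun_eq_iff)

lemma single_at_add: "single_at j (a + b) = single_at j a + single_at j (b :: 'm::monoid_add)"
  by (simp add: single_at_def fun_eq_iff)

lemma single_at_sum: "single_at j (\<Sum>k\<in>S. f k) = (\<Sum>k\<in>S. single_at j (f k))"
  by (simp add: single_at_def fun_eq_iff sum_apply_fun)

lemma sum_single_at:
  assumes "finite S" "{l. x l \<noteq> 0} \<subseteq> S"
  shows "(\<Sum>k\<in>S. single_at k (x k)) = x"
  using assms
  by (auto simp: single_at_def fun_eq_iff sum_apply_fun if_distrib[of "\<lambda>c. c = _"] cong: if_cong)

fun rel_gen :: "('p \<Rightarrow> 'p \<Rightarrow> 'm::ab_group_add \<Rightarrow> 'm) \<Rightarrow> 'p \<times> 'p \<times> 'm \<Rightarrow> 'p \<Rightarrow> 'm" where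
  "rel_gen Fm (j, k, a) = single_at j a - single_at k (Fm j k a)"

fun target :: "'p \<times> 'p \<times> 'm \<Rightarrow> 'p" where
  "target (j, k, a) = k"

definition rel_sum :: "('p \<Rightarrow> 'p \<Rightarrow> 'm::ab_group_add \<Rightarrow> 'm) \<Rightarrow> ('p \<times> 'p \<times> 'm) list \<Rightarrow> 'p \<Rightarrow> 'm" where
  "rel_sum Fm L = sum_list (map (rel_gen Fm) L)"

lemma rel_sum_Nil [simp]: "rel_sum Fm [] = 0"
  by (simp add: rel_sum_def)

lemma rel_sum_Cons [simp]: "rel_sum Fm (t # L) = rel_gen Fm t + rel_sum Fm L"
  by (simp add: rel_sum_def)

lemma rel_sum_append [simp]: "rel_sum Fm (L1 @ L2) = rel_sum Fm L1 + rel_sum Fm L2"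
  by (simp add: rel_sum_def)

lemma rel_sum_apply: "rel_sum Fm L l = sum_list (map (\<lambda>t. rel_gen Fm t l) L)"
  unfolding rel_sum_def by (induction L) simp_all

lemma rel_sum_partition:
  "rel_sum Fm (filter P L) + rel_sum Fm (filter (\<lambda>t. \<not> P t) L) = rel_sum Fm L"
  unfolding rel_sum_def by (induction L) (simp_all add: fun_eq_iff add.assoc add.left_commute)

lemma rel_sum_common_target:
  assumes "\<And>j k a. (j, k, a) \<in> set L \<Longrightarrow> k = n"
  shows "rel_sum Fm L = sum_list (map (\<lambda>(j, k, a). single_at j a) L)
    - single_at n (sum_list (map (\<lambda>(j, k, a). Fm j k a) L))"
  using assms
proof (induction L)
  case (Cons t L)
  obtain j k a where t: "t = (j, k, a)"
    by (cases t)
  with Cons.prems have "k = n"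
    by (metis list.set_intros(1))
  have targets_L: "k' = n" if "(j', k', a') \<in> set L" for j' k' a'
    using Cons.prems that by (metis list.set_intros(2))
  show ?case
    using Cons.IH[OF targets_L] unfolding t \<open>k = n\<close> by (simp add: single_at_add algebra_simps)
qed simp

locale module_functor =
  fixes s :: "'r::comm_ring_1 \<Rightarrow> 'm::ab_group_add \<Rightarrow> 'm"
    and F :: "'p::order \<Rightarrow> 'm set"
    and Fm :: "'p \<Rightarrow> 'p \<Rightarrow> 'm \<Rightarrow> 'm"
  assumes scalar_module: "module s"
    and functor_F: "is_module_functor s F Fm"
begin

lemma subspace_F: "module.subspace s (F i)"
  using functor_F unfolding is_module_functor_def by auto

lemma F_zero [simp]: "0 \<in> F i"
  using module.subspace_0[OF scalar_module subspace_F] .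

lemma F_add: "a \<in> F i \<Longrightarrow> b \<in> F i \<Longrightarrow> a + b \<in> F i"
  by (rule module.subspace_add[OF scalar_module subspace_F])

lemma F_neg: "a \<in> F i \<Longrightarrow> - a \<in> F i"
  by (rule module.subspace_neg[OF scalar_module subspace_F])

lemma F_scale: "a \<in> F i \<Longrightarrow> s c a \<in> F i"
  by (rule module.subspace_scale[OF scalar_module subspace_F])

lemma Fm_in: "j \<le> i \<Longrightarrow> a \<in> F j \<Longrightarrow> Fm j i a \<in> F i"
  using functor_F unfolding is_module_functor_def by auto

lemma Fm_add: "j \<le> i \<Longrightarrow> a \<in> F j \<Longrightarrow> b \<in> F j \<Longrightarrow> Fm j i (a + b) = Fm j i a + Fm j i b"
  using functor_F unfolding is_module_functor_def by auto

lemma Fm_scale: "j \<le> i \<Longrightarrow> a \<in> F j \<Longrightarrow> Fm j i (s c a) = s c (Fm j i a)"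
  using functor_F unfolding is_module_functor_def by auto

lemma Fm_id: "a \<in> F i \<Longrightarrow> Fm i i a = a"
  using functor_F unfolding is_module_functor_def by auto

lemma Fm_comp: "j \<le> k \<Longrightarrow> k \<le> i \<Longrightarrow> a \<in> F j \<Longrightarrow> Fm k i (Fm j k a) = Fm j i a"
  using functor_F unfolding is_module_functor_def by auto

lemma Fm_zero: "j \<le> i \<Longrightarrow> Fm j i 0 = 0"
  using Fm_add[of j i 0 0] by simp

lemma Fm_neg: "j \<le> i \<Longrightarrow> a \<in> F j \<Longrightarrow> Fm j i (- a) = - Fm j i a"
  using minus_unique[of "Fm j i a" "Fm j i (- a)"] Fm_add[of j i a "- a"]
  by (simp add: F_neg Fm_zero)

lemma module_fscale: "module (fscale s :: 'r \<Rightarrow> ('p \<Rightarrow> 'm) \<Rightarrow> 'p \<Rightarrow> 'm)"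
  using scalar_module unfolding module_def fscale_def by (auto simp: fun_eq_iff)

lemma dsum_below_zero: "0 \<in> dsum_below F i"
  by (simp add: dsum_below_def)

lemma dsum_below_add:
  assumes "x \<in> dsum_below F i" "y \<in> dsum_below F i"
  shows "x + y \<in> dsum_below F i"
proof -
  have "{l. (x + y) l \<noteq> 0} \<subseteq> {l. x l \<noteq> 0} \<union> {l. y l \<noteq> 0}"
    by auto
  with assms show ?thesis
    unfolding dsum_below_def by (auto intro: F_add finite_subset)
qed

lemma dsum_below_neg: "x \<in> dsum_below F i \<Longrightarrow> - x \<in> dsum_below F i"
  unfolding dsum_below_def by (simp add: F_neg)

lemma dsum_below_diff: "x \<in> dsum_below F i \<Longrightarrow> y \<in> dsum_below F i \<Longrightarrow> x - y \<in> dsum_below F i"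
  using dsum_below_add[of x i "- y"] dsum_below_neg[of y i] by simp

lemma dsum_below_sum_list: "(\<And>v. v \<in> set vs \<Longrightarrow> v \<in> dsum_below F i) \<Longrightarrow> sum_list vs \<in> dsum_below F i"
  by (induction vs) (auto intro: dsum_below_zero dsum_below_add)

lemma single_at_in_dsum_below: "j < i \<Longrightarrow> a \<in> F j \<Longrightarrow> single_at j a \<in> dsum_below F i"
  unfolding dsum_below_def by (auto simp: single_at_apply intro: finite_subset[of _ "{j}"])

lemma dsum_below_support:
  assumes "x \<in> dsum_below F i"
  shows "finite {l. x l \<noteq> 0}" and "{l. x l \<noteq> 0} \<subseteq> {l. l < i}"
  using assms unfolding dsum_below_def by auto

lemma dsum_map_eq_sum:
  assumes "finite S" "{l. x l \<noteq> 0} \<subseteq> S" "S \<subseteq> {l. l \<le> i}"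
  shows "dsum_map Fm i x = (\<Sum>l\<in>S. Fm l i (x l))"
  unfolding dsum_map_def
  by (rule sum.mono_neutral_left) (use assms in \<open>auto simp: Fm_zero\<close>)

lemma dsum_below_restrict:
  assumes "finite J" "J \<subseteq> {j. j < i}" "\<forall>j\<in>J. x j \<in> F j"
  shows "(\<lambda>l. if l \<in> J then x l else 0) \<in> dsum_below F i"
    and "dsum_map Fm i (\<lambda>l. if l \<in> J then x l else 0) = (\<Sum>j\<in>J. Fm j i (x j))"
proof -
  have "{l. (if l \<in> J then x l else 0) \<noteq> 0} \<subseteq> J"
    by auto
  with assms show "(\<lambda>l. if l \<in> J then x l else 0) \<in> dsum_below F i"
    unfolding dsum_below_def by (auto intro: finite_subset)
  from \<open>{l. (if l \<in> J then x l else 0) \<noteq> 0} \<subseteq> J\<close> assms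
  show "dsum_map Fm i (\<lambda>l. if l \<in> J then x l else 0) = (\<Sum>j\<in>J. Fm j i (x j))"
    by (subst dsum_map_eq_sum[of J]) auto
qed

lemma dsum_map_add:
  assumes "x \<in> dsum_below F i" "y \<in> dsum_below F i"
  shows "dsum_map Fm i (x + y) = dsum_map Fm i x + dsum_map Fm i y"
proof -
  let ?S = "{l. x l \<noteq> 0} \<union> {l. y l \<noteq> 0}"
  have S: "finite ?S" "?S \<subseteq> {l. l \<le> i}"
    using dsum_below_support[OF assms(1)] dsum_below_support[OF assms(2)]
    by (auto intro: less_imp_le)
  have "dsum_map Fm i (x + y) = (\<Sum>l\<in>?S. Fm l i (x l + y l))"
    using S by (subst dsum_map_eq_sum[of ?S]) auto
  also have "\<dots> = (\<Sum>l\<in>?S. Fm l i (x l) + Fm l i (y l))"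
    using S assms unfolding dsum_below_def by (intro sum.cong) (auto simp: Fm_add)
  also have "\<dots> = dsum_map Fm i x + dsum_map Fm i y"
    using S by (simp add: sum.distrib dsum_map_eq_sum[of ?S])
  finally show ?thesis .
qed

lemma dsum_map_zero: "dsum_map Fm i 0 = 0"
  by (simp add: dsum_map_def)

lemma dsum_map_neg: "x \<in> dsum_below F i \<Longrightarrow> dsum_map Fm i (- x) = - dsum_map Fm i x"
  using minus_unique[of "dsum_map Fm i x" "dsum_map Fm i (- x)"]
    dsum_map_add[of x i "- x"] dsum_below_neg[of x i]
  by (simp add: dsum_map_zero)

lemma dsum_map_diff:
  "x \<in> dsum_below F i \<Longrightarrow> y \<in> dsum_below F i \<Longrightarrow>
    dsum_map Fm i (x - y) = dsum_map Fm i x - dsum_map Fm i y"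
  using dsum_map_add[of x i "- y"] dsum_map_neg[of y i] dsum_below_neg[of y i] by simp

lemma dsum_map_sum_list:
  "(\<And>v. v \<in> set vs \<Longrightarrow> v \<in> dsum_below F i) \<Longrightarrow>
    dsum_map Fm i (sum_list vs) = sum_list (map (dsum_map Fm i) vs)"
  by (induction vs) (auto simp: dsum_map_zero dsum_map_add dsum_below_sum_list)

lemma dsum_map_single_at: "j \<le> i \<Longrightarrow> a \<in> F j \<Longrightarrow> dsum_map Fm i (single_at j a) = Fm j i a"
  by (subst dsum_map_eq_sum[of "{j}"]) (auto simp: single_at_apply)

lemma colim_rel_eq_span:
  "colim_rel s F Fm i =
    module.span (fscale s) {rel_gen Fm (j, k, a) | j k a. j \<le> k \<and> k < i \<and> a \<in> F j}"
  unfolding colim_rel_def by (simp add: single_at_def fun_diff_def)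

lemma subspace_colim_rel: "module.subspace (fscale s) (colim_rel s F Fm i)"
  unfolding colim_rel_def by (rule module.subspace_span[OF module_fscale])

lemma colim_rel_zero: "0 \<in> colim_rel s F Fm i"
  by (rule module.subspace_0[OF module_fscale subspace_colim_rel])

lemma colim_rel_add: "x \<in> colim_rel s F Fm i \<Longrightarrow> y \<in> colim_rel s F Fm i \<Longrightarrow> x + y \<in> colim_rel s F Fm i"
  by (rule module.subspace_add[OF module_fscale subspace_colim_rel])

lemma colim_rel_diff: "x \<in> colim_rel s F Fm i \<Longrightarrow> y \<in> colim_rel s F Fm i \<Longrightarrow> x - y \<in> colim_rel s F Fm i"
  by (rule module.subspace_diff[OF module_fscale subspace_colim_rel])

lemma rel_gen_in_colim_rel: "j \<le> k \<Longrightarrow> k < i \<Longrightarrow> a \<in> F j \<Longrightarrow> rel_gen Fm (j, k, a) \<in> colim_rel s F Fm i"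
  unfolding colim_rel_eq_span by (rule module.span_base[OF module_fscale]) blast

lemma rel_gen_self: "a \<in> F j \<Longrightarrow> rel_gen Fm (j, j, a) = 0"
  by (simp add: Fm_id)

lemma fscale_rel_gen:
  "j \<le> k \<Longrightarrow> a \<in> F j \<Longrightarrow> fscale s c (rel_gen Fm (j, k, a)) = rel_gen Fm (j, k, s c a)"
  by (simp add: fscale_def single_at_def fun_eq_iff Fm_scale
      module.scale_zero_right[OF scalar_module] module.scale_right_diff_distrib[OF scalar_module])

lemma colim_relE:
  assumes "x \<in> colim_rel s F Fm i"
  obtains L where "\<forall>(j, k, a)\<in>set L. j < k \<and> k < i \<and> a \<in> F j" and "x = rel_sum Fm L"
proof -
  have "\<exists>L. (\<forall>(j, k, a)\<in>set L. j < k \<and> k < i \<and> a \<in> F j) \<and> x = rel_sum Fm L"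
    using assms unfolding colim_rel_eq_span
  proof (induction rule: module.span_induct_alt[OF module_fscale, consumes 1, case_names base step])
    case base
    show ?case
      by (intro exI[of _ "[]"]) simp
  next
    case (step c g y)
    then obtain j k a L where g: "g = rel_gen Fm (j, k, a)" "j \<le> k" "k < i" "a \<in> F j"
      and L: "\<forall>(j, k, a)\<in>set L. j < k \<and> k < i \<and> a \<in> F j" "y = rel_sum Fm L"
      by blast
    have gc: "fscale s c g = rel_gen Fm (j, k, s c a)"
      unfolding g(1) using g(2,4) by (rule fscale_rel_gen)
    show ?case
    proof (cases "j = k")
      case True
      with g(4) have "fscale s c g = 0"
        unfolding gc by (simp only: rel_gen_self F_scale)
      with L show ?thesis
        by auto
    next
      case False
      have "fscale s c g + y = rel_sum Fm ((j, k, s c a) # L)"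
        by (simp only: gc L(2) rel_sum_Cons)
      moreover have "\<forall>(j, k, a)\<in>set ((j, k, s c a) # L). j < k \<and> k < i \<and> a \<in> F j"
        using L(1) g(2-4) False by (auto simp: F_scale)
      ultimately show ?thesis
        by blast
    qed
  qed
  with that show ?thesis
    by blast
qed

lemma colim_rel_in_kernel:
  assumes "x \<in> colim_rel s F Fm i"
  shows "x \<in> dsum_below F i" and "dsum_map Fm i x = 0"
proof -
  obtain L where L: "\<forall>(j, k, a)\<in>set L. j < k \<and> k < i \<and> a \<in> F j" "x = rel_sum Fm L"
    using colim_relE[OF assms] .
  have gen: "rel_gen Fm t \<in> dsum_below F i" "dsum_map Fm i (rel_gen Fm t) = 0" if "t \<in> set L" for t
  proof -
    obtain j k a where t: "t = (j, k, a)" "j < k" "k < i" "a \<in> F j"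
      using L(1) \<open>t \<in> set L\<close> by (cases t) auto
    then have sources: "single_at j a \<in> dsum_below F i" "single_at k (Fm j k a) \<in> dsum_below F i"
      by (auto intro!: single_at_in_dsum_below Fm_in)
    with t show "rel_gen Fm t \<in> dsum_below F i"
      by (simp add: dsum_below_diff)
    from t sources show "dsum_map Fm i (rel_gen Fm t) = 0"
      by (simp add: dsum_map_diff dsum_map_single_at Fm_in Fm_comp)
  qed
  show "x \<in> dsum_below F i"
    unfolding L(2) rel_sum_def by (rule dsum_below_sum_list) (metis gen(1) imageE set_map)
  show "dsum_map Fm i x = 0"
    unfolding L(2) rel_sum_def
    by (subst dsum_map_sum_list) (auto simp del: rel_gen.simps simp: gen(1) gen(2) cong: map_cong)
qed

lemma dsum_diff_single_map_in_colim_rel: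
  assumes y: "y \<in> dsum_below F m" and "m < i"
  shows "y - single_at m (dsum_map Fm m y) \<in> colim_rel s F Fm i"
proof -
  let ?S = "{l. y l \<noteq> 0}"
  have S: "finite ?S" "?S \<subseteq> {l. l < m}"
    using dsum_below_support[OF y] .
  have "y - single_at m (dsum_map Fm m y) = (\<Sum>k\<in>?S. rel_gen Fm (k, m, y k))"
    unfolding rel_gen.simps sum_subtractf single_at_sum dsum_map_def
      sum_single_at[OF S(1) order_refl] ..
  also have "\<dots> \<in> colim_rel s F Fm i"
    using S y \<open>m < i\<close> unfolding dsum_below_def
    by (intro module.subspace_sum[OF module_fscale subspace_colim_rel] rel_gen_in_colim_rel) auto
  finally show ?thesis .
qed

definition colim_class :: "'p \<Rightarrow> ('p \<Rightarrow> 'm) \<Rightarrow> ('p \<Rightarrow> 'm) set" where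
  "colim_class i x = {y \<in> dsum_below F i. y - x \<in> colim_rel s F Fm i}"

lemma colim_eq_image: "colim s F Fm i = colim_class i ` dsum_below F i"
  unfolding colim_def colim_class_def ..

lemma colim_map_colim_class:
  assumes x: "x \<in> dsum_below F i"
  shows "colim_map Fm i (colim_class i x) = dsum_map Fm i x"
  unfolding colim_map_def
proof (rule the_equality)
  show "\<exists>y\<in>colim_class i x. dsum_map Fm i x = dsum_map Fm i y"
    using x colim_rel_zero by (auto simp: colim_class_def)
next
  fix v
  assume "\<exists>y\<in>colim_class i x. v = dsum_map Fm i y"
  then obtain y where y: "y \<in> dsum_below F i" "y - x \<in> colim_rel s F Fm i" "v = dsum_map Fm i y"
    by (auto simp: colim_class_def)
  then show "v = dsum_map Fm i x"
    using colim_rel_in_kernel(2)[OF y(2)] dsum_map_diff[OF y(1) x] by simp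
qed

lemma colim_class_eq_iff:
  assumes "x \<in> dsum_below F i" "x' \<in> dsum_below F i"
  shows "colim_class i x = colim_class i x' \<longleftrightarrow> x - x' \<in> colim_rel s F Fm i"
proof
  assume "colim_class i x = colim_class i x'"
  moreover have "x \<in> colim_class i x"
    using assms colim_rel_zero by (simp add: colim_class_def)
  ultimately show "x - x' \<in> colim_rel s F Fm i"
    by (simp add: colim_class_def)
next
  assume "x - x' \<in> colim_rel s F Fm i"
  then have "y - x \<in> colim_rel s F Fm i \<longleftrightarrow> y - x' \<in> colim_rel s F Fm i" for y
    using colim_rel_add[of "y - x" i "x - x'"] colim_rel_diff[of "y - x'" i "x - x'"] by auto
  then show "colim_class i x = colim_class i x'"
    by (simp add: colim_class_def)
qed

lemma inj_on_colim_map_iff: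
  "inj_on (colim_map Fm i) (colim s F Fm i) \<longleftrightarrow>
    (\<forall>x\<in>dsum_below F i. dsum_map Fm i x = 0 \<longrightarrow> x \<in> colim_rel s F Fm i)"
proof
  assume inj: "inj_on (colim_map Fm i) (colim s F Fm i)"
  show "\<forall>x\<in>dsum_below F i. dsum_map Fm i x = 0 \<longrightarrow> x \<in> colim_rel s F Fm i"
  proof (intro ballI impI)
    fix x
    assume x: "x \<in> dsum_below F i" "dsum_map Fm i x = 0"
    have "colim_map Fm i (colim_class i x) = colim_map Fm i (colim_class i 0)"
      by (simp only: colim_map_colim_class[OF x(1)] colim_map_colim_class[OF dsum_below_zero]
          x(2) dsum_map_zero)
    moreover have "colim_class i x \<in> colim s F Fm i" "colim_class i 0 \<in> colim s F Fm i"
      unfolding colim_eq_image using x(1) dsum_below_zero[of i] by simp_all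
    ultimately have "colim_class i x = colim_class i 0"
      by (rule inj_onD[OF inj])
    then show "x \<in> colim_rel s F Fm i"
      using colim_class_eq_iff[OF x(1) dsum_below_zero] by simp
  qed
next
  assume kernel: "\<forall>x\<in>dsum_below F i. dsum_map Fm i x = 0 \<longrightarrow> x \<in> colim_rel s F Fm i"
  show "inj_on (colim_map Fm i) (colim s F Fm i)"
    unfolding colim_eq_image
  proof (rule inj_onI)
    fix c c'
    assume "c \<in> colim_class i ` dsum_below F i" "c' \<in> colim_class i ` dsum_below F i"
      and eq: "colim_map Fm i c = colim_map Fm i c'"
    then obtain x x' where x: "x \<in> dsum_below F i" "x' \<in> dsum_below F i"
      and c: "c = colim_class i x" "c' = colim_class i x'"
      by blast
    from eq have "dsum_map Fm i (x - x') = 0"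
      unfolding c colim_map_colim_class[OF x(1)] colim_map_colim_class[OF x(2)] dsum_map_diff[OF x]
      by simp
    with kernel dsum_below_diff[OF x] have "x - x' \<in> colim_rel s F Fm i"
      by blast
    then show "c = c'"
      unfolding c using colim_class_eq_iff[OF x] by blast
  qed
qed

lemma ImF_eq_image: "ImF F Fm m = dsum_map Fm m ` dsum_below F m"
proof (intro equalityI subsetI)
  fix v
  assume "v \<in> ImF F Fm m"
  then obtain K y where v: "v = (\<Sum>k\<in>K. Fm k m (y k))"
    and K: "finite K" "K \<subseteq> {k. k < m}" "\<forall>k\<in>K. y k \<in> F k"
    unfolding ImF_def by blast
  have "v = dsum_map Fm m (\<lambda>l. if l \<in> K then y l else 0)"
    unfolding v dsum_below_restrict(2)[OF K] ..
  with dsum_below_restrict(1)[OF K] show "v \<in> dsum_map Fm m ` dsum_below F m"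
    by blast
next
  fix v
  assume "v \<in> dsum_map Fm m ` dsum_below F m"
  then obtain x where x: "x \<in> dsum_below F m" "v = dsum_map Fm m x"
    by blast
  have "v = (\<Sum>k\<in>{l. x l \<noteq> 0}. Fm k m (x k))"
    unfolding x(2) dsum_map_def ..
  moreover have "\<forall>k\<in>{l. x l \<noteq> 0}. x k \<in> F k"
    using x(1) unfolding dsum_below_def by blast
  ultimately show "v \<in> ImF F Fm m"
    using dsum_below_support[OF x(1)] unfolding ImF_def by blast
qed

lemma ImF_zero: "0 \<in> ImF F Fm m"
  unfolding ImF_eq_image using dsum_below_zero dsum_map_zero by (metis image_eqI)

lemma Fm_in_ImF: "j < m \<Longrightarrow> b \<in> F j \<Longrightarrow> Fm j m b \<in> ImF F Fm m"
  unfolding ImF_eq_image using single_at_in_dsum_below dsum_map_single_at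
  by (metis image_eqI less_imp_le)

lemma ImF_add:
  assumes "u \<in> ImF F Fm m" "v \<in> ImF F Fm m"
  shows "u + v \<in> ImF F Fm m"
proof -
  obtain x y where "x \<in> dsum_below F m" "y \<in> dsum_below F m"
    and "u = dsum_map Fm m x" "v = dsum_map Fm m y"
    using assms unfolding ImF_eq_image by blast
  then show ?thesis
    unfolding ImF_eq_image by (metis dsum_below_add dsum_map_add image_eqI)
qed

lemma ImF_sum_list: "(\<And>v. v \<in> set vs \<Longrightarrow> v \<in> ImF F Fm m) \<Longrightarrow> sum_list vs \<in> ImF F Fm m"
  by (induction vs) (auto intro: ImF_zero ImF_add)

lemma rel_sum_value_in_ImF_if_no_target_above:
  assumes L: "\<forall>(j, k, a)\<in>set L. j < k \<and> a \<in> F j"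
    and no_target_above: "\<forall>t\<in>set L. \<not> m < target t"
  shows "rel_sum Fm L m \<in> ImF F Fm m"
  unfolding rel_sum_apply
proof (rule ImF_sum_list)
  fix v
  assume "v \<in> set (map (\<lambda>t. rel_gen Fm t m) L)"
  then obtain j k a where t: "(j, k, a) \<in> set L" "v = rel_gen Fm (j, k, a) m"
    by auto
  with L no_target_above have "j < k" "a \<in> F j" "\<not> m < k"
    by fastforce+
  then have "v = (if m = k then Fm j m (- a) else 0)"
    using t(2) by (auto simp: single_at_apply Fm_neg)
  with \<open>j < k\<close> \<open>a \<in> F j\<close> show "v \<in> ImF F Fm m"
    by (auto simp: ImF_zero F_neg intro: Fm_in_ImF)
qed

lemma rel_sum_common_target_in_kernel:
  assumes L: "\<And>j k a. (j, k, a) \<in> set L \<Longrightarrow> j < n \<and> k = n \<and> a \<in> F j"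
    and vanish: "rel_sum Fm L n = 0"
  shows "rel_sum Fm L \<in> dsum_below F n \<and> dsum_map Fm n (rel_sum Fm L) = 0"
proof -
  define y where "y = sum_list (map (\<lambda>(j, k, a). single_at j a) L)"
  have y: "y \<in> dsum_below F n"
    unfolding y_def by (intro dsum_below_sum_list) (auto dest: L intro: single_at_in_dsum_below)
  have "dsum_map Fm n y = sum_list (map (dsum_map Fm n) (map (\<lambda>(j, k, a). single_at j a) L))"
    unfolding y_def by (intro dsum_map_sum_list) (auto dest: L intro: single_at_in_dsum_below)
  also have "\<dots> = sum_list (map (\<lambda>(j, k, a). Fm j k a) L)"
    unfolding map_map
    by (intro arg_cong[where f = sum_list] map_cong)
      (auto dest: L simp: dsum_map_single_at less_imp_le)
  finally have rel_sum_L: "rel_sum Fm L = y - single_at n (dsum_map Fm n y)"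
    unfolding y_def using L by (simp add: rel_sum_common_target)
  have "y n = 0"
    using dsum_below_support(2)[OF y] by auto
  with vanish have "dsum_map Fm n y = 0"
    using fun_cong[OF rel_sum_L, of n] by (simp add: single_at_apply)
  with y rel_sum_L show ?thesis
    by simp
qed

lemma rel_sum_lower_top_target:
  assumes inj: "inj_on (colim_map Fm n) (colim s F Fm n)"
    and L: "\<forall>(j, k, a)\<in>set L. j < k \<and> a \<in> F j"
    and top: "\<forall>t\<in>set L. \<not> n < target t"
    and n: "n \<in> target ` set L"
    and vanish: "rel_sum Fm L n = 0"
  obtains L' where "\<forall>(j, k, a)\<in>set L'. j < k \<and> a \<in> F j" and "rel_sum Fm L' = rel_sum Fm L"
    and "(mset (map target L'), mset (map target L)) \<in> mult {(x, y). x < y}"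
proof -
  define L1 where "L1 = filter (\<lambda>t. target t \<noteq> n) L"
  define L2 where "L2 = filter (\<lambda>t. \<not> target t \<noteq> n) L"
  have partition: "rel_sum Fm L = rel_sum Fm L1 + rel_sum Fm L2"
    unfolding L1_def L2_def by (rule rel_sum_partition[symmetric])
  have "rel_gen Fm t n = 0" if "t \<in> set L1" for t
  proof -
    obtain j k a where t: "t = (j, k, a)"
      by (cases t)
    with that have "(j, k, a) \<in> set L" "k \<noteq> n"
      unfolding L1_def by simp_all
    with L top have "j \<noteq> n"
      by fastforce
    with t \<open>k \<noteq> n\<close> show ?thesis
      by (simp add: single_at_apply)
  qed
  then have "rel_sum Fm L1 n = 0"
    unfolding rel_sum_apply by (simp cong: map_cong)
  with vanish have "rel_sum Fm L2 n = 0"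
    using fun_cong[OF partition, of n] by simp
  then have "rel_sum Fm L2 \<in> dsum_below F n \<and> dsum_map Fm n (rel_sum Fm L2) = 0"
    using L by (intro rel_sum_common_target_in_kernel) (auto simp: L2_def)
  with inj have "rel_sum Fm L2 \<in> colim_rel s F Fm n"
    by (simp add: inj_on_colim_map_iff)
  then obtain L3 where L3: "\<forall>(j, k, a)\<in>set L3. j < k \<and> k < n \<and> a \<in> F j"
      "rel_sum Fm L2 = rel_sum Fm L3"
    by (rule colim_relE)
  show ?thesis
  proof (rule that[of "L1 @ L3"])
    show "\<forall>(j, k, a)\<in>set (L1 @ L3). j < k \<and> a \<in> F j"
      using L L3(1) unfolding L1_def by auto
    show "rel_sum Fm (L1 @ L3) = rel_sum Fm L"
      using partition L3(2) by simp
    have "mset (map target L) = mset (map target L1) + mset (map target L2)"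
      unfolding L1_def L2_def by (induction L) auto
    moreover have "n \<in> set (map target L2)"
      using n unfolding L2_def by force
    then have "mset (map target L2) \<noteq> {#}"
      by auto
    moreover have "\<forall>k\<in>#mset (map target L3). \<exists>k'\<in>#mset (map target L2). (k, k') \<in> {(x, y). x < y}"
      using L3(1) \<open>n \<in> set (map target L2)\<close> by fastforce
    ultimately show "(mset (map target (L1 @ L3)), mset (map target L)) \<in> mult {(x, y). x < y}"
      by (simp add: one_step_implies_mult)
  qed
qed

lemma rel_sum_value_in_ImF:
  assumes "DCC TYPE('p)"
    and inj: "\<forall>n. inj_on (colim_map Fm n) (colim s F Fm n)"
  shows "\<forall>(j, k, a)\<in>set L. j < k \<and> a \<in> F j \<Longrightarrow> \<forall>l. m < l \<longrightarrow> rel_sum Fm L l = 0 \<Longrightarrow>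
    rel_sum Fm L m \<in> ImF F Fm m"
  using wf_mult[OF wf_less_if_DCC[OF assms(1)]]
proof (induction "mset (map target L)" arbitrary: L rule: wf_induct_rule)
  case less
  show ?case
  proof (cases "\<exists>t\<in>set L. m < target t")
    case False
    with less.prems(1) show ?thesis
      by (intro rel_sum_value_in_ImF_if_no_target_above) auto
  next
    case True
    let ?T = "{k \<in> target ` set L. m < k}"
    obtain n where n: "n \<in> ?T" "\<forall>k\<in>?T. n \<le> k \<longrightarrow> n = k"
      using finite_has_maximal[of ?T] True by auto
    have top: "\<forall>t\<in>set L. \<not> n < target t"
    proof (intro ballI notI)
      fix t
      assume "t \<in> set L" "n < target t"
      with n show False
        by (metis (mono_tags, lifting) image_eqI mem_Collect_eq order.strict_trans order_less_imp_le
            order_less_irrefl)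
    qed
    obtain L' where L': "\<forall>(j, k, a)\<in>set L'. j < k \<and> a \<in> F j" "rel_sum Fm L' = rel_sum Fm L"
      "(mset (map target L'), mset (map target L)) \<in> mult {(x, y). x < y}"
      using rel_sum_lower_top_target[OF inj[rule_format] less.prems(1) top] n(1) less.prems(2)
      by blast
    have "rel_sum Fm L' m \<in> ImF F Fm m"
      by (rule less.hyps[OF L'(3) L'(1)]) (simp add: L'(2) less.prems(2))
    with L'(2) show ?thesis
      by simp
  qed
qed

lemma top_value_in_ImF:
  assumes J: "finite J" "J \<subseteq> {j. j \<le> i}" "\<forall>j\<in>J. x j \<in> F j" "i \<in> J"
    and sum_zero: "(\<Sum>j\<in>J. Fm j i (x j)) = 0"
  shows "x i \<in> ImF F Fm i"
proof -
  let ?x' = "\<lambda>l. if l \<in> J - {i} then x l else 0"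
  have "J - {i} \<subseteq> {j. j < i}"
    using J(2) by (auto simp: order.order_iff_strict)
  with J have x': "?x' \<in> dsum_below F i" "dsum_map Fm i ?x' = (\<Sum>j\<in>J - {i}. Fm j i (x j))"
    using dsum_below_restrict[of "J - {i}" i x] by auto
  have "x i + dsum_map Fm i ?x' = 0"
    using sum_zero sum.remove[OF J(1,4), of "\<lambda>j. Fm j i (x j)"] Fm_id[of "x i" i] J(3,4) x'(2)
    by simp
  then have "x i = dsum_map Fm i (- ?x')"
    unfolding dsum_map_neg[OF x'(1)] eq_neg_iff_add_eq_0 .
  with dsum_below_neg[OF x'(1)] show ?thesis
    unfolding ImF_eq_image by blast
qed

lemma maximal_value_in_ImF:
  assumes "DCC TYPE('p)"
    and inj: "\<forall>n. inj_on (colim_map Fm n) (colim s F Fm n)"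
    and J: "finite J" "J \<subseteq> {j. j < i}" "\<forall>j\<in>J. x j \<in> F j"
    and sum_zero: "(\<Sum>j\<in>J. Fm j i (x j)) = 0"
    and j0: "j0 \<in> J" "\<forall>k\<in>J. \<not> j0 < k"
  shows "x j0 \<in> ImF F Fm j0"
proof -
  let ?x' = "\<lambda>l. if l \<in> J then x l else 0"
  from J sum_zero have "?x' \<in> dsum_below F i" "dsum_map Fm i ?x' = 0"
    using dsum_below_restrict[of J i x] by auto
  with inj have "?x' \<in> colim_rel s F Fm i"
    by (simp add: inj_on_colim_map_iff)
  then obtain L where L: "\<forall>(j, k, a)\<in>set L. j < k \<and> k < i \<and> a \<in> F j" "?x' = rel_sum Fm L"
    by (rule colim_relE)
  have "rel_sum Fm L j0 \<in> ImF F Fm j0"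
  proof (rule rel_sum_value_in_ImF[OF assms(1,2)])
    show "\<forall>(j, k, a)\<in>set L. j < k \<and> a \<in> F j"
      using L(1) by auto
    show "\<forall>l. j0 < l \<longrightarrow> rel_sum Fm L l = 0"
      using j0(2) L(2)[symmetric] by (auto simp: fun_eq_iff)
  qed
  with L(2)[symmetric] j0(1) show ?thesis
    by (metis (mono_tags, lifting))
qed

lemma pseudo_projective_if_colim_map_inj:
  assumes "DCC TYPE('p)"
    and "\<forall>n. inj_on (colim_map Fm n) (colim s F Fm n)"
  shows "pseudo_projective F Fm"
  unfolding pseudo_projective_def pseudo_projective_at_def
proof (intro allI impI ballI)
  fix i J x j0
  assume "finite J \<and> J \<subseteq> {j. j \<le> i} \<and> (\<forall>j\<in>J. x j \<in> F j) \<and> (\<Sum>j\<in>J. Fm j i (x j)) = 0"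
    and "j0 \<in> maxset J"
  then have J: "finite J" "J \<subseteq> {j. j \<le> i}" "\<forall>j\<in>J. x j \<in> F j" "(\<Sum>j\<in>J. Fm j i (x j)) = 0"
    and j0: "j0 \<in> J" "\<forall>k\<in>J. \<not> j0 < k"
    unfolding maxset_def by auto
  show "x j0 \<in> ImF F Fm j0"
  proof (cases "i \<in> J")
    case True
    with J(2) j0 have "j0 = i"
      by (auto simp: order.order_iff_strict)
    with J True show ?thesis
      by (simp add: top_value_in_ImF)
  next
    case False
    with J(2) have "J \<subseteq> {j. j < i}"
      by (auto simp: order.order_iff_strict)
    with assms J j0 show ?thesis
      by (intro maximal_value_in_ImF) auto
  qed
qed

lemma kernel_element_lower_maximal_support:
  assumes pp: "pseudo_projective_at F Fm i"
    and x: "x \<in> dsum_below F i" "dsum_map Fm i x = 0"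
    and m: "x m \<noteq> 0" "\<forall>l. x l \<noteq> 0 \<longrightarrow> \<not> m < l"
  obtains r where "r \<in> colim_rel s F Fm i"
    and "(mset_set {l. x l + r l \<noteq> 0}, mset_set {l. x l \<noteq> 0}) \<in> mult {(x, y). x < y}"
proof -
  let ?S = "{l. x l \<noteq> 0}"
  have S: "finite ?S" "?S \<subseteq> {l. l < i}"
    using dsum_below_support[OF x(1)] .
  with m have "m < i"
    by blast
  have "m \<in> maxset ?S"
    using m unfolding maxset_def by auto
  moreover have "finite ?S \<and> ?S \<subseteq> {j. j \<le> i} \<and> (\<forall>j\<in>?S. x j \<in> F j) \<and> (\<Sum>j\<in>?S. Fm j i (x j)) = 0"
    using S x unfolding dsum_map_def dsum_below_def by (auto intro: less_imp_le)
  ultimately have "x m \<in> ImF F Fm m"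
    using pp unfolding pseudo_projective_at_def by blast
  then obtain y where y: "y \<in> dsum_below F m" "dsum_map Fm m y = x m"
    unfolding ImF_eq_image by auto
  define r where "r = y - single_at m (x m)"
  have r: "r \<in> colim_rel s F Fm i"
    unfolding r_def y(2)[symmetric] using y(1) \<open>m < i\<close> by (rule dsum_diff_single_map_in_colim_rel)
  have "x + r \<in> dsum_below F i"
    using x(1) colim_rel_in_kernel(1)[OF r] by (rule dsum_below_add)
  then have "finite {l. x l + r l \<noteq> 0}"
    using dsum_below_support(1) by fastforce
  moreover have "y l = 0" if "\<not> l < m" for l
    using dsum_below_support(2)[OF y(1)] that by auto
  then have "x m + r m = 0" and "\<forall>l\<in>{l. x l + r l \<noteq> 0} - ?S. l < m"
    unfolding r_def by (auto simp: single_at_apply)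
  ultimately have "(mset_set {l. x l + r l \<noteq> 0}, mset_set ?S) \<in> mult {(x, y). x < y}"
    using m(1) S(1) by (intro mult_mset_set_less[of _ _ m]) auto
  with r that show ?thesis
    by blast
qed

lemma kernel_in_colim_rel_if_pseudo_projective:
  assumes "DCC TYPE('p)" and pp: "pseudo_projective F Fm"
  shows "x \<in> dsum_below F i \<Longrightarrow> dsum_map Fm i x = 0 \<Longrightarrow> x \<in> colim_rel s F Fm i"
  using wf_mult[OF wf_less_if_DCC[OF assms(1)]]
proof (induction "mset_set {l. x l \<noteq> 0}" arbitrary: x rule: wf_induct_rule)
  case less
  let ?S = "{l. x l \<noteq> 0}"
  show ?case
  proof (cases "?S = {}")
    case True
    then have "x = 0"
      by (auto simp: fun_eq_iff)
    with colim_rel_zero show ?thesis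
      by simp
  next
    case False
    obtain m where m: "m \<in> ?S" "\<forall>l\<in>?S. m \<le> l \<longrightarrow> m = l"
      using finite_has_maximal[OF dsum_below_support(1)[OF less.prems(1)] False] by blast
    then have maximal: "\<forall>l. x l \<noteq> 0 \<longrightarrow> \<not> m < l"
      by (auto simp: order.order_iff_strict)
    from pp have "pseudo_projective_at F Fm i"
      unfolding pseudo_projective_def ..
    then obtain r where r: "r \<in> colim_rel s F Fm i"
      and "(mset_set {l. x l + r l \<noteq> 0}, mset_set ?S) \<in> mult {(x, y). x < y}"
      using less.prems m(1)[unfolded mem_Collect_eq] maximal
      by (rule kernel_element_lower_maximal_support)
    moreover have "x + r \<in> dsum_below F i" "dsum_map Fm i (x + r) = 0"
      using less.prems colim_rel_in_kernel[OF r] by (simp_all add: dsum_below_add dsum_map_add)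
    ultimately have "x + r \<in> colim_rel s F Fm i"
      using less.hyps[of "x + r"] by simp
    with r show ?thesis
      using colim_rel_diff[of "x + r" i r] by simp
  qed
qed

end

theorem theoremA:
  fixes s :: "'r::comm_ring_1 \<Rightarrow> 'm::ab_group_add \<Rightarrow> 'm"
    and F :: "'p::order \<Rightarrow> 'm set"
    and Fm :: "'p \<Rightarrow> 'p \<Rightarrow> 'm \<Rightarrow> 'm"
  assumes "module s"
    and "DCC TYPE('p)"
    and "is_module_functor s F Fm"
  shows "(\<forall>i. inj_on (colim_map Fm i) (colim s F Fm i)) \<longleftrightarrow> pseudo_projective F Fm"
proof -
  interpret module_functor s F Fm
    using assms(1,3) by (rule module_functor.intro)
  show ?thesis
    using pseudo_projective_if_colim_map_inj[OF assms(2)]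
      kernel_in_colim_rel_if_pseudo_projective[OF assms(2)] inj_on_colim_map_iff
    by blast
qed

end
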